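(* Let $\Psi=(\psi_{ij})$ and $\Phi=(\phi_{ij})$ be orthogonal quantum Latin squares of order $6$, where $\Psi$ is classical: there are an orthonormal basis $e_1,\dots,e_6$ of $\mathbb C^6$ and a Latin square $L=(L_{ij})$ of order $6$ on $\{1,\dots,6\}$ with $\psi_{ij}\in\mathbb C e_{L_{ij}}$ for all $i,j$. Suppose $L$ has a subsquare of order three, i.e. there are $R,C\subseteq\{1,\dots,6\}$ with $|R|=|C|=3$ such that $\{L_{ij}: i\in R, j\in C\}$ has exactly $3$ elements. Then for each of the four blocks $A\times B$ with $A\in\{R,\{1,\dots,6\}\setminus R\}$ and $B\in\{C,\{1,\dots,6\}\setminus C\}$, the nine vectors $\phi_{ij}$, $(i,j)\in A\times B$, are pairwise distinct, in the sense that no two of them are scalar multiples of each other.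
   Context: A quantum Latin square (QLS) of order $n$ is an $n\times n$ matrix $\Psi=(\psi_{ij})_{1\le i,j\le n}$ whose entries are unit vectors in $\mathbb C^n$ such that the entries of each row and the entries of each column form an orthonormal basis of $\mathbb C^n$. Two QLS $\Psi=(\psi_{ij})$ and $\Phi=(\phi_{ij})$ of order $n$ are orthogonal if $\{\psi_{ij}\otimes\phi_{ij}: 1\le i,j\le n\}$ is an orthonormal basis of $\mathbb C^n\otimes\mathbb C^n$. *)

theory Defs
  imports "HOL-Analysis.Analysis"
begin

definition cinner :: "complex ^ 'n \<Rightarrow> complex ^ 'n \<Rightarrow> complex" where
  "cinner x y = (\<Sum>k\<in>UNIV. x $ k * cnj (y $ k))"

definition orthonormal_basis :: "'i set \<Rightarrow> ('i \<Rightarrow> complex ^ 'n) \<Rightarrow> bool" where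
  "orthonormal_basis I f \<longleftrightarrow>
     (\<forall>i\<in>I. \<forall>j\<in>I. cinner (f i) (f j) = (if i = j then 1 else 0)) \<and>
     (\<forall>v :: complex ^ 'n. \<exists>c :: 'i \<Rightarrow> complex. v = (\<Sum>i\<in>I. c i *s f i))"

definition qls :: "('n \<Rightarrow> 'n \<Rightarrow> complex ^ 'n) \<Rightarrow> bool" where
  "qls \<Psi> \<longleftrightarrow> (\<forall>i. orthonormal_basis UNIV (\<lambda>j. \<Psi> i j)) \<and>
               (\<forall>j. orthonormal_basis UNIV (\<lambda>i. \<Psi> i j))"

text \<open>Tensor product of vectors: C^n \<otimes> C^m identified with C^(n \<times> m).\<close>
definition tensor :: "complex ^ 'n \<Rightarrow> complex ^ 'm \<Rightarrow> complex ^ ('n \<times> 'm)" where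
  "tensor x y = (\<chi> p. x $ fst p * y $ snd p)"

definition orthogonal_qls :: "('n \<Rightarrow> 'n \<Rightarrow> complex ^ 'n) \<Rightarrow> ('n \<Rightarrow> 'n \<Rightarrow> complex ^ 'n) \<Rightarrow> bool" where
  "orthogonal_qls \<Psi> \<Phi> \<longleftrightarrow> qls \<Psi> \<and> qls \<Phi> \<and>
     orthonormal_basis (UNIV :: ('n \<times> 'n) set) (\<lambda>(i, j). tensor (\<Psi> i j) (\<Phi> i j))"

definition latin_square :: "('n \<Rightarrow> 'n \<Rightarrow> 'n) \<Rightarrow> bool" where
  "latin_square L \<longleftrightarrow> (\<forall>i. bij (L i)) \<and> (\<forall>j. bij (\<lambda>i. L i j))"

end

theory Submission
  imports Defs
begin

text \<open>Fix a unit vector \<open>v = \<phi>\<^sub>k\<^sub>l\<close> and weigh each cell by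
  \<open>G i j = |\<langle>v, \<phi>\<^sub>i\<^sub>j\<rangle>|\<^sup>2\<close>. Parseval's identity in the row and column bases of
  \<open>\<Phi>\<close> makes every row and column of \<open>G\<close> sum to 1, and Parseval in the product basis
  \<open>\<psi>\<^sub>i\<^sub>j \<otimes> \<phi>\<^sub>i\<^sub>j\<close>, applied to \<open>e\<^sub>s \<otimes> v\<close>, makes the cells carrying each symbol \<open>s\<close>
  of \<open>L\<close> sum to 1. A subsquare of order 3 forces its three symbols to occupy exactly
  the two diagonal blocks, and these linear constraints then give every block total weight
  3/2. A second cell of the block of \<open>(k, l)\<close> whose vector is parallel to \<open>v\<close> would add
  weight 1 to the weight 1 of \<open>(k, l)\<close> itself.\<close>

lemma cnj_cinner: "cnj (cinner x y) = cinner y x"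
  unfolding cinner_def by (simp add: mult.commute)

lemma cinner_sum_left:
  "cinner (\<Sum>i\<in>I. c i *s f i) w = (\<Sum>i\<in>I. c i * cinner (f i) w)"
  unfolding cinner_def
  by (simp add: sum_distrib_right sum_distrib_left mult.assoc sum.swap[of _ I])

lemma cinner_scale_left: "cinner (c *s x) y = c * cinner x y"
  unfolding cinner_def by (simp add: sum_distrib_left algebra_simps)

lemma cinner_scale_right: "cinner x (c *s y) = cnj c * cinner x y"
  unfolding cinner_def by (simp add: sum_distrib_left algebra_simps)

lemma cinner_scale_self: "cinner (c *s x) (c *s x) = of_real ((cmod c)\<^sup>2) * cinner x x"
  unfolding cinner_scale_left cinner_scale_right complex_norm_square by (simp add: mult.assoc)

lemma cinner_tensor: "cinner (tensor a b) (tensor c d) = cinner a c * cinner b d"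
proof -
  have "cinner (tensor a b) (tensor c d)
      = (\<Sum>p\<in>UNIV \<times> UNIV. a $ fst p * b $ snd p * cnj (c $ fst p * d $ snd p))"
    unfolding cinner_def tensor_def by simp
  also have "\<dots> = (\<Sum>x\<in>UNIV. \<Sum>y\<in>UNIV. (a $ x * cnj (c $ x)) * (b $ y * cnj (d $ y)))"
    by (subst sum.cartesian_product) (simp add: case_prod_beta algebra_simps)
  also have "\<dots> = cinner a c * cinner b d"
    unfolding cinner_def by (simp add: sum_product)
  finally show ?thesis .
qed

lemma orthonormal_basis_cinner:
  "orthonormal_basis I f \<Longrightarrow> i \<in> I \<Longrightarrow> j \<in> I \<Longrightarrow>
    cinner (f i) (f j) = (if i = j then 1 else 0)"
  unfolding orthonormal_basis_def by blast

lemma orthonormal_basis_parseval: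
  assumes onb: "orthonormal_basis I f" and fin: "finite I"
  shows "(\<Sum>i\<in>I. complex_of_real ((cmod (cinner v (f i)))\<^sup>2)) = cinner v v"
proof -
  from onb obtain c where v: "v = (\<Sum>i\<in>I. c i *s f i)"
    unfolding orthonormal_basis_def by blast
  have coeff: "cinner v (f j) = c j" if "j \<in> I" for j
  proof -
    have "cinner v (f j) = (\<Sum>i\<in>I. c i * cinner (f i) (f j))"
      by (subst v, rule cinner_sum_left)
    also have "\<dots> = (\<Sum>i\<in>I. if i = j then c i else 0)"
      using orthonormal_basis_cinner[OF onb] that by (intro sum.cong) auto
    also have "\<dots> = c j" using fin that by simp
    finally show ?thesis .
  qed
  have "cinner v v = (\<Sum>i\<in>I. c i * cinner (f i) v)"
    by (subst (1) v, rule cinner_sum_left)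
  also have "\<dots> = (\<Sum>i\<in>I. c i * cnj (c i))"
    by (intro sum.cong refl) (metis coeff cnj_cinner)
  also have "\<dots> = (\<Sum>i\<in>I. complex_of_real ((cmod (cinner v (f i)))\<^sup>2))"
    by (intro sum.cong refl) (metis coeff complex_norm_square)
  finally show ?thesis by simp
qed

lemma orthonormal_basis_parseval_unit:
  assumes "orthonormal_basis I f" "finite I" "cinner v v = 1"
  shows "(\<Sum>i\<in>I. (cmod (cinner v (f i)))\<^sup>2) = 1"
proof -
  have "complex_of_real (\<Sum>i\<in>I. (cmod (cinner v (f i)))\<^sup>2) = 1"
    using orthonormal_basis_parseval[OF assms(1,2), of v] assms(3) by (simp only: of_real_sum)
  then show ?thesis by (metis of_real_eq_1_iff)
qed

lemma cmod_eq_1_of_unit_scale: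
  assumes "cinner (c *s x) (c *s x) = 1" "cinner x x = 1"
  shows "cmod c = 1"
proof -
  have "complex_of_real ((cmod c)\<^sup>2) = 1" using assms by (simp add: cinner_scale_self)
  then have "(cmod c)\<^sup>2 = 1" by (metis of_real_eq_1_iff)
  then show ?thesis using norm_ge_zero[of c] by (auto simp: power2_eq_1_iff)
qed

lemma qls_cinner_self:
  assumes "qls \<Phi>" shows "cinner (\<Phi> i j) (\<Phi> i j) = 1"
proof -
  have "orthonormal_basis UNIV (\<Phi> i)" using assms unfolding qls_def by blast
  then show ?thesis using orthonormal_basis_cinner[of UNIV "\<Phi> i" j j] by simp
qed

lemma qls_parseval:
  assumes "qls \<Phi>" "cinner v v = 1"
  shows "(\<Sum>j\<in>UNIV. (cmod (cinner v (\<Phi> i j)))\<^sup>2) = 1"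
    and "(\<Sum>i\<in>UNIV. (cmod (cinner v (\<Phi> i j)))\<^sup>2) = 1"
proof -
  have "orthonormal_basis UNIV (\<Phi> i)" "orthonormal_basis UNIV (\<lambda>i. \<Phi> i j)"
    using assms(1) unfolding qls_def by blast+
  then show "(\<Sum>j\<in>UNIV. (cmod (cinner v (\<Phi> i j)))\<^sup>2) = 1"
    and "(\<Sum>i\<in>UNIV. (cmod (cinner v (\<Phi> i j)))\<^sup>2) = 1"
    using orthonormal_basis_parseval_unit[OF _ finite assms(2)] by blast+
qed

lemma classical_orthogonal_qls_symbol_parseval:
  fixes \<Psi> \<Phi> :: "'n::finite \<Rightarrow> 'n \<Rightarrow> complex ^ 'n" and L :: "'n \<Rightarrow> 'n \<Rightarrow> 'n"
  assumes orth: "orthogonal_qls \<Psi> \<Phi>"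
    and e_onb: "orthonormal_basis UNIV e"
    and classical: "\<forall>i j. \<exists>c :: complex. \<Psi> i j = c *s e (L i j)"
    and v_unit: "cinner v v = 1"
  shows "(\<Sum>(i, j)\<in>{(i, j). L i j = s}. (cmod (cinner v (\<Phi> i j)))\<^sup>2) = 1"
proof -
  have onb: "orthonormal_basis UNIV (\<lambda>(i, j). tensor (\<Psi> i j) (\<Phi> i j))"
    and \<Psi>_unit: "cinner (\<Psi> i j) (\<Psi> i j) = 1" for i j
    using orth qls_cinner_self unfolding orthogonal_qls_def by blast+
  have e_cinner: "cinner (e s) (e t) = (if s = t then 1 else 0)" for s t
    using orthonormal_basis_cinner[OF e_onb] by simp
  define w where "w = tensor (e s) v"
  have "cinner w w = 1" unfolding w_def by (simp add: cinner_tensor e_cinner v_unit)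
  have coeff: "(cmod (cinner w (tensor (\<Psi> i j) (\<Phi> i j))))\<^sup>2
      = (if L i j = s then (cmod (cinner v (\<Phi> i j)))\<^sup>2 else 0)" for i j
  proof -
    obtain d where d: "\<Psi> i j = d *s e (L i j)" using classical by blast
    have "cmod d = 1"
      using cmod_eq_1_of_unit_scale[of d "e (L i j)"] \<Psi>_unit[of i j] d e_cinner by simp
    then show ?thesis
      using d unfolding w_def by (simp add: cinner_tensor cinner_scale_right e_cinner norm_mult)
  qed
  have "1 = (\<Sum>(i, j)\<in>UNIV. (cmod (cinner w (tensor (\<Psi> i j) (\<Phi> i j))))\<^sup>2)"
    using orthonormal_basis_parseval_unit[OF onb _ \<open>cinner w w = 1\<close>]
    by (simp add: case_prod_unfold)
  also have "\<dots> = (\<Sum>(i, j)\<in>UNIV. if L i j = s then (cmod (cinner v (\<Phi> i j)))\<^sup>2 else 0)"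
    by (simp only: coeff)
  also have "\<dots> = (\<Sum>(i, j)\<in>{(i, j). L i j = s}. (cmod (cinner v (\<Phi> i j)))\<^sup>2)"
    by (simp add: sum.If_cases case_prod_unfold)
  finally show ?thesis by simp
qed

lemma inj_notin_of_image_subset_card_eq:
  assumes "inj f" "f ` A \<subseteq> B" "card B = card A" "finite B" "x \<notin> A"
  shows "f x \<notin> B"
proof -
  have "card (f ` A) = card B"
    using assms(1,3) by (simp add: card_image inj_on_subset)
  then have "f ` A = B" using assms(2,4) by (simp add: card_subset_eq)
  then show ?thesis using assms(1,5) by (auto dest: injD)
qed

lemma latin_subsquare_symbols:
  fixes L :: "'n::finite \<Rightarrow> 'n \<Rightarrow> 'n" and R C S :: "'n set"
  assumes latin: "latin_square L"
    and S_def: "S = {L i j | i j. i \<in> R \<and> j \<in> C}"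
    and R_card: "card R = card S" and C_card: "card C = card S"
    and UNIV_card: "CARD('n) = 2 * card S"
  shows "L i j \<in> S \<longleftrightarrow> (i \<in> R \<longleftrightarrow> j \<in> C)"
proof -
  have row_inj: "inj (L i)" and col_inj: "inj (\<lambda>i. L i j)" for i j
    using latin unfolding latin_square_def bij_def by blast+
  have inside: "L i j \<in> S" if "i \<in> R" "j \<in> C" for i j
    using that S_def by blast
  have row_outside: "L i j \<notin> S" if "i \<in> R" "j \<notin> C" for i j
    using inj_notin_of_image_subset_card_eq[OF row_inj[of i], of C S j] inside that C_card by auto
  have col_outside: "L i j \<notin> S" if "i \<notin> R" "j \<in> C" for i j
    using inj_notin_of_image_subset_card_eq[OF col_inj[of j], of R S i] inside that R_card by auto
  have "card (UNIV - S) = card R"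
    using R_card UNIV_card by (simp add: card_Diff_subset)
  then have opposite: "L i j \<in> S" if "i \<notin> R" "j \<notin> C" for i j
    using inj_notin_of_image_subset_card_eq[OF col_inj[of j], of R "UNIV - S" i] row_outside that
    by auto
  show ?thesis
    using inside row_outside col_outside opposite by blast
qed

lemma latin_subsquare_block_sums:
  fixes G :: "'n::finite \<Rightarrow> 'n \<Rightarrow> real" and L :: "'n \<Rightarrow> 'n \<Rightarrow> 'n"
  assumes rows: "\<And>i. (\<Sum>j\<in>UNIV. G i j) = 1"
    and cols: "\<And>j. (\<Sum>i\<in>UNIV. G i j) = 1"
    and syms: "\<And>s. (\<Sum>(i, j)\<in>{(i, j). L i j = s}. G i j) = 1"
    and symbols: "\<And>i j. L i j \<in> S \<longleftrightarrow> (i \<in> R \<longleftrightarrow> j \<in> C)"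
    and R_card: "card R = card S" and C_card: "card C = card S"
    and UNIV_card: "CARD('n) = 2 * card S"
    and A: "A \<in> {R, UNIV - R}" and B: "B \<in> {C, UNIV - C}"
  shows "(\<Sum>(i, j)\<in>A \<times> B. G i j) = card S / 2"
proof -
  let ?blk = "\<lambda>A B. \<Sum>(i, j)\<in>A \<times> B. G i j"
  have split_row: "?blk A UNIV = ?blk A B + ?blk A (UNIV - B)"
    and split_col: "?blk UNIV B = ?blk A B + ?blk (UNIV - A) B" for A B :: "'n set"
  proof -
    have "A \<times> UNIV = A \<times> B \<union> A \<times> (UNIV - B)" "UNIV \<times> B = A \<times> B \<union> (UNIV - A) \<times> B"
      by blast+
    then show "?blk A UNIV = ?blk A B + ?blk A (UNIV - B)"
      and "?blk UNIV B = ?blk A B + ?blk (UNIV - A) B"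
      by (simp_all add: sum.union_disjoint[symmetric] Times_Int_Times)
  qed
  have rows_block: "?blk A UNIV = card A" for A
    by (simp add: sum.cartesian_product[symmetric] rows)
  have cols_block: "?blk UNIV B = card B" for B
    unfolding sum.cartesian_product[symmetric] by (subst sum.swap) (simp add: cols)
  have "(\<Sum>(i, j)\<in>{(i, j). L i j \<in> S}. G i j) = (\<Sum>s\<in>S. \<Sum>(i, j)\<in>{(i, j). L i j = s}. G i j)"
    by (subst sum.group[symmetric, of "{(i, j). L i j \<in> S}" S "\<lambda>(i, j). L i j"])
      (auto intro!: sum.cong arg_cong[where f = "sum _"])
  also have "\<dots> = card S" by (simp add: syms)
  also have "{(i, j). L i j \<in> S} = R \<times> C \<union> (UNIV - R) \<times> (UNIV - C)"
    using symbols by auto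
  finally have "?blk R C + ?blk (UNIV - R) (UNIV - C) = card S"
    by (simp add: sum.union_disjoint Times_Int_Times)
  moreover have "?blk R C + ?blk R (UNIV - C) = card S"
    using split_row[of R C] rows_block[of R] R_card by simp
  moreover have "?blk R C + ?blk (UNIV - R) C = card S"
    using split_col[of C R] cols_block[of C] C_card by simp
  moreover have "card S + ?blk (UNIV - R) C + ?blk (UNIV - R) (UNIV - C) = 2 * card S"
    using split_col[of UNIV R] split_row[of "UNIV - R" C] rows_block[of R] rows_block[of UNIV]
      R_card UNIV_card
    by simp
  ultimately show ?thesis
    using A B by auto
qed

theorem mainTheorem12:
  fixes \<Psi> \<Phi> :: "6 \<Rightarrow> 6 \<Rightarrow> complex ^ 6"
    and e :: "6 \<Rightarrow> complex ^ 6"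
    and L :: "6 \<Rightarrow> 6 \<Rightarrow> 6"
    and R C :: "6 set"
  assumes orth: "orthogonal_qls \<Psi> \<Phi>"
    and e_onb: "orthonormal_basis UNIV e"
    and L_latin: "latin_square L"
    and classical: "\<forall>i j. \<exists>c :: complex. \<Psi> i j = c *s e (L i j)"
    and R_card: "card R = 3" and C_card: "card C = 3"
    and subsq: "card {L i j | i j. i \<in> R \<and> j \<in> C} = 3"
  shows "\<forall>A \<in> {R, UNIV - R}. \<forall>B \<in> {C, UNIV - C}.
           \<forall>i\<in>A. \<forall>j\<in>B. \<forall>k\<in>A. \<forall>l\<in>B. (i, j) \<noteq> (k, l) \<longrightarrow>
             \<not> (\<exists>c :: complex. \<Phi> i j = c *s \<Phi> k l)"
proof (intro ballI impI notI)
  fix A B i j k l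
  assume A: "A \<in> {R, UNIV - R}" and B: "B \<in> {C, UNIV - C}"
    and cells: "i \<in> A" "j \<in> B" "k \<in> A" "l \<in> B" "(i, j) \<noteq> (k, l)"
    and "\<exists>c :: complex. \<Phi> i j = c *s \<Phi> k l"
  then obtain c where c: "\<Phi> i j = c *s \<Phi> k l" by blast
  have qls: "qls \<Phi>" using orth unfolding orthogonal_qls_def by blast
  define v where "v = \<Phi> k l"
  have v_unit: "cinner v v = 1" unfolding v_def using qls by (rule qls_cinner_self)
  define G where "G i j = (cmod (cinner v (\<Phi> i j)))\<^sup>2" for i j
  have rows: "\<And>i. (\<Sum>j\<in>UNIV. G i j) = 1" and cols: "\<And>j. (\<Sum>i\<in>UNIV. G i j) = 1"
    using qls_parseval[OF qls v_unit] unfolding G_def by blast+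
  have syms: "\<And>s. (\<Sum>(i, j)\<in>{(i, j). L i j = s}. G i j) = 1"
    using classical_orthogonal_qls_symbol_parseval[OF orth e_onb classical v_unit]
    unfolding G_def .
  define S where "S = {L i j | i j. i \<in> R \<and> j \<in> C}"
  have S_card: "card S = 3" using subsq unfolding S_def .
  have "(\<Sum>(i, j)\<in>A \<times> B. G i j) = 3 / 2"
    using latin_subsquare_block_sums[OF rows cols syms
        latin_subsquare_symbols[OF L_latin S_def] _ _ _ A B] R_card C_card S_card
    by simp
  moreover have "G k l = 1" "G i j = 1"
    using v_unit qls_cinner_self[OF qls, of i j] cmod_eq_1_of_unit_scale[of c v]
    unfolding G_def v_def c by (simp_all add: cinner_scale_right norm_mult)
  then have "(\<Sum>(i, j)\<in>{(i, j), (k, l)}. G i j) = 2"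
    using cells(5) by simp
  moreover have "(\<Sum>(i, j)\<in>{(i, j), (k, l)}. G i j) \<le> (\<Sum>(i, j)\<in>A \<times> B. G i j)"
    using cells by (intro sum_mono2) (auto simp: G_def)
  ultimately show False by simp
qed

end
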